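(* Let $n\ge 1$ and consider the NSGA-II with population size $N\ge 4(n+1)$ optimizing \textsc{OneMinMax} (with any way of generating the offspring population $Q_t$). Suppose that in some iteration $t$ the combined population $R_t=P_t\cup Q_t$ contains an individual $x$ with $f(x)=(k,n-k)$ for some $k\in\{0,\dots,n\}$. Then the next parent population $P_{t+1}$ contains an individual $y$ with $f(y)=(k,n-k)$.
   Context: Search space $\{0,1\}^n$; objective $f=(f_1,f_2):\{0,1\}^n\to\mathbb{R}^2$, both objectives maximized. $x$ strictly dominates $y$ if $f_1(x)\ge f_1(y)$, $f_2(x)\ge f_2(y)$ and at least one inequality is strict. Populations are multisets of bit strings; for a population $P$, $f(P)=\{f(x):x\in P\}$. Non-dominated sorting of a population $S$: $F_1$ is the set of individuals of $S$ not strictly dominated by any individual of $S$; inductively, $F_{k+1}$ is the set of individuals of $S\setminus(F_1\cup\dots\cup F_k)$ not strictly dominated by any individual of $S\setminus(F_1\cup\dots\cup F_k)$; the rank of $x$ in $S$ is the $k$ with $x\in F_k$. Crowding distance of the individuals of a set $S$ (computed with respect to $S$): start with $\mathrm{cDis}(x)=0$ for all $x\in S$; for each $i\in\{1,2\}$, sort $S$ in ascending $f_i$-value as $S_{i.1},\dots,S_{i.|S|}$ (ties broken arbitrarily), set $\mathrm{cDis}(S_{i.1})=\mathrm{cDis}(S_{i.|S|})=+\infty$, and for $2\le j\le |S|-1$ add $\frac{f_i(S_{i.j+1})-f_i(S_{i.j-1})}{f_i(S_{i.|S|})-f_i(S_{i.1})}$ to $\mathrm{cDis}(S_{i.j})$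 (if $f_i$ is constant on $S$, these summands are taken to be $0$). The NSGA-II with population size $N$: $P_0$ consists of $N$ independent uniformly random bit strings; in iteration $t=0,1,2,\dots$ it generates an offspring population $Q_t$ of $N$ individuals, sets $R_t=P_t\cup Q_t$ (multiset union, $2N$ individuals), computes the fronts $F_1,F_2,\dots$ of $R_t$, lets $i^*$ be minimal with $\sum_{i\le i^*}|F_i|\ge N$, computes the crowding distance of each individual of $F_i$ ($i\le i^*$) with respect to $F_i$, and sets $P_{t+1}=F_1\cup\dots\cup F_{i^*-1}\cup\tilde F_{i^*}$, where $\tilde F_{i^*}$ consists of the $N-\sum_{i<i^*}|F_i|$ individuals of $F_{i^*}$ with largest crowding distance, ties broken uniformly at random. \textsc{OneMinMax}: $f(x)=(n-\sum_{i=1}^n x_i,\ \sum_{i=1}^n x_i)$. Its Pareto front is $\{(k,n-k):k\in\{0,\dots,n\}\}$; every bit string is Pareto optimal. *)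

theory Defs
  imports Complex_Main "HOL-Library.Extended_Real"
begin

text \<open>Individuals of a combined
population are identified by their positions in a list R (so copies of the
same bit string are distinct individuals, as in the multiset reading).\<close>

definition sdom :: "real \<times> real \<Rightarrow> real \<times> real \<Rightarrow> bool" where
  "sdom a b \<longleftrightarrow> fst a \<ge> fst b \<and> snd a \<ge> snd b \<and> (fst a > fst b \<or> snd a > snd b)"

definition nondom :: "('a \<Rightarrow> real \<times> real) \<Rightarrow> 'a list \<Rightarrow> nat set \<Rightarrow> nat set" where
  "nondom f R S = {i \<in> S. \<not> (\<exists>j\<in>S. sdom (f (R ! j)) (f (R ! i)))}"

primrec remaining :: "('a \<Rightarrow> real \<times> real) \<Rightarrow> 'a list \<Rightarrow> nat \<Rightarrow> nat set" where
  "remaining f R 0 = {..<length R}"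
| "remaining f R (Suc k) = remaining f R k - nondom f R (remaining f R k)"

text \<open>front f R k is the front F_{k+1} of the paper (fronts indexed from 0 here).\<close>
definition front :: "('a \<Rightarrow> real \<times> real) \<Rightarrow> 'a list \<Rightarrow> nat \<Rightarrow> nat set" where
  "front f R k = nondom f R (remaining f R k)"

definition obj :: "nat \<Rightarrow> real \<times> real \<Rightarrow> real" where
  "obj i v = (if i = 0 then fst v else snd v)"

definition is_sorting :: "('a \<Rightarrow> real \<times> real) \<Rightarrow> 'a list \<Rightarrow> nat \<Rightarrow> nat set \<Rightarrow> nat list \<Rightarrow> bool" where
  "is_sorting f R i S \<sigma> \<longleftrightarrow> distinct \<sigma> \<and> set \<sigma> = S \<and> sorted (map (\<lambda>j. obj i (f (R ! j))) \<sigma>)"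

definition cd_contrib :: "('a \<Rightarrow> real \<times> real) \<Rightarrow> 'a list \<Rightarrow> nat \<Rightarrow> nat list \<Rightarrow> nat \<Rightarrow> ereal" where
  "cd_contrib f R i \<sigma> p =
     (let m = length \<sigma>; v = (\<lambda>q. obj i (f (R ! (\<sigma> ! q))));
          lo = v 0; hi = v (m - 1)
      in if p = 0 \<or> p = m - 1 then \<infinity>
         else if hi = lo then 0
         else ereal ((v (p + 1) - v (p - 1)) / (hi - lo)))"

definition pos_in :: "nat list \<Rightarrow> nat \<Rightarrow> nat" where
  "pos_in \<sigma> x = (THE p. p < length \<sigma> \<and> \<sigma> ! p = x)"

definition cdis :: "('a \<Rightarrow> real \<times> real) \<Rightarrow> 'a list \<Rightarrow> nat list \<Rightarrow> nat list \<Rightarrow> nat \<Rightarrow> ereal" where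
  "cdis f R \<sigma>0 \<sigma>1 x = cd_contrib f R 0 \<sigma>0 (pos_in \<sigma>0 x) + cd_contrib f R 1 \<sigma>1 (pos_in \<sigma>1 x)"

text \<open>sel (a set of positions in R) is a possible outcome of the NSGA-II survival
  selection with population size N applied to the combined population R
  (for some tie-breaking in the sortings and in the crowding-distance selection).\<close>
definition nsga2_survivors :: "('a \<Rightarrow> real \<times> real) \<Rightarrow> nat \<Rightarrow> 'a list \<Rightarrow> nat set \<Rightarrow> bool" where
  "nsga2_survivors f N R sel \<longleftrightarrow>
     (\<exists>istar \<sigma>0 \<sigma>1 T.
        istar = (LEAST i. (\<Sum>j\<le>i. card (front f R j)) \<ge> N) \<and>
        is_sorting f R 0 (front f R istar) \<sigma>0 \<and>
        is_sorting f R 1 (front f R istar) \<sigma>1 \<and>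
        T \<subseteq> front f R istar \<and>
        card T = N - (\<Sum>j<istar. card (front f R j)) \<and>
        (\<forall>a\<in>T. \<forall>b\<in>front f R istar - T. cdis f R \<sigma>0 \<sigma>1 b \<le> cdis f R \<sigma>0 \<sigma>1 a) \<and>
        sel = (\<Union>j<istar. front f R j) \<union> T)"

definition next_pop :: "'a list \<Rightarrow> nat set \<Rightarrow> 'a list" where
  "next_pop R sel = map (\<lambda>i. R ! i) (sorted_list_of_set sel)"

text \<open>Parent populations P_t that can occur in a run of the NSGA-II on bit strings
  of length n with population size N (offspring generated in any way).\<close>
inductive nsga2_reachable :: "(bool list \<Rightarrow> real \<times> real) \<Rightarrow> nat \<Rightarrow> nat \<Rightarrow> bool list list \<Rightarrow> bool"
  for f :: "bool list \<Rightarrow> real \<times> real" and n N :: nat where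
  init: "length P = N \<Longrightarrow> \<forall>x\<in>set P. length x = n \<Longrightarrow> nsga2_reachable f n N P"
| step: "nsga2_reachable f n N P \<Longrightarrow> length Q = N \<Longrightarrow> \<forall>x\<in>set Q. length x = n \<Longrightarrow>
         nsga2_survivors f N (P @ Q) sel \<Longrightarrow> nsga2_reachable f n N (next_pop (P @ Q) sel)"

definition oneminmax :: "nat \<Rightarrow> bool list \<Rightarrow> real \<times> real" where
  "oneminmax n x = (real n - real (length (filter id x)), real (length (filter id x)))"

end

theory Submission
  imports Defs
begin

text \<open>For OneMinMax no individual dominates another, so the whole combined population is the
first front and survival is decided by crowding distance alone. Along a sorting by one objective,
the crowding contribution is non-negative and vanishes except at the first and last position of a
block of equal objective values; an objective with at most \<open>n + 1\<close> values therefore gives a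
positive contribution to at most \<open>2(n + 1)\<close> individuals, and at most \<open>4(n + 1) \<le> N\<close> individuals
have positive crowding distance. The first individual of value \<open>k\<close> in the sorting by \<open>f\<^sub>1\<close> has
positive crowding distance; if no individual of value \<open>k\<close> survived, all \<open>N\<close> survivors would have
crowding distance at least as large, giving \<open>N + 1\<close> individuals of positive distance.\<close>

definition crowding_term :: "(nat \<Rightarrow> real) \<Rightarrow> nat \<Rightarrow> nat \<Rightarrow> ereal" where
  "crowding_term v m p =
     (if p = 0 \<or> p = m - 1 then \<infinity>
      else if v (m - 1) = v 0 then 0
      else ereal ((v (p + 1) - v (p - 1)) / (v (m - 1) - v 0)))"

definition block_ends :: "(nat \<Rightarrow> real) \<Rightarrow> nat \<Rightarrow> nat set" where
  "block_ends v m = {p. p < m \<and> (p = 0 \<or> v (p - 1) \<noteq> v p \<or> p = m - 1 \<or> v p \<noteq> v (p + 1))}"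

lemma crowding_term_nonneg:
  assumes mono: "mono_on {..<m} v" and "p < m"
  shows "0 \<le> crowding_term v m p"
proof (cases "p = 0 \<or> p = m - 1")
  case False
  then have "v (p - 1) \<le> v (p + 1)" and "v 0 \<le> v (m - 1)"
    using \<open>p < m\<close> by (auto intro!: mono_onD[OF mono])
  with False show ?thesis by (auto simp: crowding_term_def)
qed (simp add: crowding_term_def)

lemma crowding_term_pos_imp_block_end:
  assumes "p < m" and "0 < crowding_term v m p"
  shows "p \<in> block_ends v m"
  using assms by (auto simp: crowding_term_def block_ends_def split: if_splits)

lemma crowding_term_pos_at_block_start:
  assumes mono: "mono_on {..<m} v" and "p < m" and start: "p = 0 \<or> v (p - 1) \<noteq> v p"
  shows "0 < crowding_term v m p"
proof (cases "p = 0 \<or> p = m - 1")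
  case False
  have "v (p - 1) < v p"
    using start False mono_onD[OF mono, of "p - 1" p] \<open>p < m\<close> by force
  moreover have "v p \<le> v (p + 1)" "v 0 \<le> v (p - 1)" "v p \<le> v (m - 1)"
    using False \<open>p < m\<close> by (auto intro!: mono_onD[OF mono])
  ultimately show ?thesis using False by (auto simp: crowding_term_def)
qed (simp add: crowding_term_def)

lemma card_block_ends_le:
  assumes mono: "mono_on {..<m} v"
  shows "card (block_ends v m) \<le> 2 * card (v ` {..<m})"
proof -
  define starts where "starts p \<longleftrightarrow> p = 0 \<or> v (p - 1) \<noteq> v p" for p
  define g where "g p = (v p, starts p)" for p
  \<comment> \<open>Each block has one first and one last position, distinguished by the flag \<open>starts\<close>.\<close>
  have distinct_images: "g p \<noteq> g q"
    if "p \<in> block_ends v m" "q \<in> block_ends v m" "p < q" for p q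
  proof
    assume eq: "g p = g q"
    have "q < m" using that(2) by (simp add: block_ends_def)
    show False
    proof (cases "starts p")
      case True
      with eq \<open>p < q\<close> have "v (q - 1) \<noteq> v q" "v p = v q" by (auto simp: g_def starts_def)
      moreover have "v p \<le> v (q - 1)" "v (q - 1) \<le> v q"
        using \<open>p < q\<close> \<open>q < m\<close> by (auto intro!: mono_onD[OF mono])
      ultimately show False by linarith
    next
      case False
      with that have "v p \<noteq> v (p + 1)" "v p = v q" using eq \<open>q < m\<close>
        by (auto simp: block_ends_def starts_def g_def)
      moreover have "v p \<le> v (p + 1)" "v (p + 1) \<le> v q"
        using \<open>p < q\<close> \<open>q < m\<close> by (auto intro!: mono_onD[OF mono])
      ultimately show False by linarith
    qed
  qed
  have "inj_on g (block_ends v m)"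
    by (rule inj_onI) (metis distinct_images linorder_neqE_nat)
  then have "card (block_ends v m) = card (g ` block_ends v m)"
    by (simp add: card_image)
  also have "\<dots> \<le> card (v ` {..<m} \<times> (UNIV :: bool set))"
    by (rule card_mono) (auto simp: g_def block_ends_def)
  also have "\<dots> = 2 * card (v ` {..<m})"
    by (simp add: card_cartesian_product)
  finally show ?thesis .
qed

lemma cd_contrib_eq_crowding_term:
  "cd_contrib f R i \<sigma> p = crowding_term (\<lambda>q. obj i (f (R ! (\<sigma> ! q)))) (length \<sigma>) p"
  unfolding cd_contrib_def crowding_term_def Let_def by simp

lemma mono_on_sorting:
  assumes "is_sorting f R i S \<sigma>"
  shows "mono_on {..<length \<sigma>} (\<lambda>q. obj i (f (R ! (\<sigma> ! q))))"
proof (rule mono_onI)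
  fix p q assume "p \<in> {..<length \<sigma>}" "q \<in> {..<length \<sigma>}" "p \<le> q"
  with assms show "obj i (f (R ! (\<sigma> ! p))) \<le> obj i (f (R ! (\<sigma> ! q)))"
    using sorted_nth_mono[of "map (\<lambda>j. obj i (f (R ! j))) \<sigma>" p q]
    by (simp add: is_sorting_def)
qed

lemma pos_in_nth:
  assumes "distinct \<sigma>" and "p < length \<sigma>"
  shows "pos_in \<sigma> (\<sigma> ! p) = p"
  unfolding pos_in_def using assms by (auto intro!: the_equality simp: nth_eq_iff_index_eq)

lemma pos_in_in_set:
  assumes "distinct \<sigma>" and "x \<in> set \<sigma>"
  shows "pos_in \<sigma> x < length \<sigma>" and "\<sigma> ! pos_in \<sigma> x = x"
proof -
  obtain p where "p < length \<sigma>" "\<sigma> ! p = x"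
    using assms(2) by (auto simp: in_set_conv_nth)
  then show "pos_in \<sigma> x < length \<sigma>" "\<sigma> ! pos_in \<sigma> x = x"
    using pos_in_nth[OF assms(1)] by auto
qed

lemma cd_contrib_nonneg:
  assumes "is_sorting f R i S \<sigma>" and "j \<in> S"
  shows "0 \<le> cd_contrib f R i \<sigma> (pos_in \<sigma> j)"
  using assms crowding_term_nonneg[OF mono_on_sorting[OF assms(1)]] pos_in_in_set(1)[of \<sigma> j]
  by (simp add: cd_contrib_eq_crowding_term is_sorting_def)

lemma card_cd_contrib_pos_le:
  assumes srt: "is_sorting f R i S \<sigma>"
  shows "card {j \<in> S. 0 < cd_contrib f R i \<sigma> (pos_in \<sigma> j)}
           \<le> 2 * card ((\<lambda>j. obj i (f (R ! j))) ` S)"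
proof -
  define v where "v = (\<lambda>q. obj i (f (R ! (\<sigma> ! q))))"
  have dist: "distinct \<sigma>" and set_\<sigma>: "set \<sigma> = S"
    using srt by (auto simp: is_sorting_def)
  have "{j \<in> S. 0 < cd_contrib f R i \<sigma> (pos_in \<sigma> j)} \<subseteq> (!) \<sigma> ` block_ends v (length \<sigma>)"
  proof
    fix j assume "j \<in> {j \<in> S. 0 < cd_contrib f R i \<sigma> (pos_in \<sigma> j)}"
    then have "j \<in> set \<sigma>" "0 < crowding_term v (length \<sigma>) (pos_in \<sigma> j)"
      using set_\<sigma> by (auto simp: cd_contrib_eq_crowding_term v_def)
    then show "j \<in> (!) \<sigma> ` block_ends v (length \<sigma>)"
      using pos_in_in_set[OF dist] crowding_term_pos_imp_block_end
      by (metis image_eqI)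
  qed
  then have "card {j \<in> S. 0 < cd_contrib f R i \<sigma> (pos_in \<sigma> j)}
               \<le> card ((!) \<sigma> ` block_ends v (length \<sigma>))"
    by (rule card_mono[rotated]) (simp add: block_ends_def)
  also have "\<dots> \<le> card (block_ends v (length \<sigma>))"
    by (rule card_image_le) (simp add: block_ends_def)
  also have "\<dots> \<le> 2 * card (v ` {..<length \<sigma>})"
    using mono_on_sorting[OF srt] by (simp add: card_block_ends_le v_def)
  also have "v ` {..<length \<sigma>} = (\<lambda>j. obj i (f (R ! j))) ` S"
    unfolding set_\<sigma>[symmetric] v_def by (force simp: in_set_conv_nth image_iff)
  finally show ?thesis .
qed

lemma card_cdis_pos_le:
  assumes s0: "is_sorting f R 0 S \<sigma>0" and s1: "is_sorting f R 1 S \<sigma>1"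
  shows "card {j \<in> S. 0 < cdis f R \<sigma>0 \<sigma>1 j}
           \<le> 2 * card ((\<lambda>j. obj 0 (f (R ! j))) ` S) + 2 * card ((\<lambda>j. obj 1 (f (R ! j))) ` S)"
proof -
  define P where "P i \<sigma> = {j \<in> S. 0 < cd_contrib f R i \<sigma> (pos_in \<sigma> j)}" for i \<sigma>
  have fin: "finite S"
    using s0 by (auto simp: is_sorting_def)
  have "{j \<in> S. 0 < cdis f R \<sigma>0 \<sigma>1 j} \<subseteq> P 0 \<sigma>0 \<union> P 1 \<sigma>1"
    using cd_contrib_nonneg[OF s0] cd_contrib_nonneg[OF s1]
    by (force simp: P_def cdis_def order_le_less)
  then have "card {j \<in> S. 0 < cdis f R \<sigma>0 \<sigma>1 j} \<le> card (P 0 \<sigma>0 \<union> P 1 \<sigma>1)"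
    by (rule card_mono[rotated]) (simp add: P_def fin)
  also have "\<dots> \<le> card (P 0 \<sigma>0) + card (P 1 \<sigma>1)"
    by (rule card_Un_le)
  finally show ?thesis
    using card_cd_contrib_pos_le[OF s0] card_cd_contrib_pos_le[OF s1] unfolding P_def by linarith
qed

lemma crowding_selection_keeps_fst_values:
  assumes s0: "is_sorting f R 0 S \<sigma>0" and s1: "is_sorting f R 1 S \<sigma>1"
    and "T \<subseteq> S" and "card T = N"
    and cmp: "\<forall>a\<in>T. \<forall>b\<in>S - T. cdis f R \<sigma>0 \<sigma>1 b \<le> cdis f R \<sigma>0 \<sigma>1 a"
    and few: "card {j \<in> S. 0 < cdis f R \<sigma>0 \<sigma>1 j} \<le> N"
    and "a \<in> S"
  shows "\<exists>b\<in>T. obj 0 (f (R ! b)) = obj 0 (f (R ! a))"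
proof -
  define v where "v = (\<lambda>q. obj 0 (f (R ! (\<sigma>0 ! q))))"
  define c where "c = obj 0 (f (R ! a))"
  have dist: "distinct \<sigma>0" and set_\<sigma>0: "set \<sigma>0 = S"
    using s0 by (auto simp: is_sorting_def)
  have fin: "finite S"
    using s0 by (auto simp: is_sorting_def)
  define p where "p = (LEAST p. p < length \<sigma>0 \<and> v p = c)"
  have "pos_in \<sigma>0 a < length \<sigma>0 \<and> v (pos_in \<sigma>0 a) = c"
    using pos_in_in_set[OF dist] \<open>a \<in> S\<close> set_\<sigma>0 by (simp add: v_def c_def)
  then have "p < length \<sigma>0 \<and> v p = c"
    unfolding p_def by (rule LeastI)
  then have p: "p < length \<sigma>0" "v p = c" by auto
  have start: "p = 0 \<or> v (p - 1) \<noteq> v p"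
  proof (rule ccontr)
    assume "\<not> (p = 0 \<or> v (p - 1) \<noteq> v p)"
    then have "p \<noteq> 0" and "p - 1 < length \<sigma>0 \<and> v (p - 1) = c"
      using p by auto
    from this(2) have "p \<le> p - 1"
      unfolding p_def by (rule Least_le)
    with \<open>p \<noteq> 0\<close> show False by simp
  qed
  define b where "b = \<sigma>0 ! p"
  have "b \<in> S"
    unfolding b_def set_\<sigma>0[symmetric] using p(1) by simp
  have "0 < cd_contrib f R 0 \<sigma>0 (pos_in \<sigma>0 b)"
    using crowding_term_pos_at_block_start[OF mono_on_sorting[OF s0, folded v_def] p(1) start]
    by (simp add: b_def pos_in_nth[OF dist p(1)] cd_contrib_eq_crowding_term v_def)
  then have b_pos: "0 < cdis f R \<sigma>0 \<sigma>1 b"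
    using cd_contrib_nonneg[OF s1 \<open>b \<in> S\<close>] by (simp add: cdis_def add_pos_nonneg)
  have "obj 0 (f (R ! b)) = c"
    using p(2) by (simp add: b_def v_def)
  show ?thesis
  proof (rule ccontr)
    assume "\<not> ?thesis"
    with \<open>obj 0 (f (R ! b)) = c\<close> have "b \<notin> T"
      unfolding c_def by blast
    have "0 < cdis f R \<sigma>0 \<sigma>1 t" if "t \<in> T" for t
      using cmp that \<open>b \<in> S\<close> \<open>b \<notin> T\<close> b_pos by (meson DiffI less_le_trans)
    then have "insert b T \<subseteq> {j \<in> S. 0 < cdis f R \<sigma>0 \<sigma>1 j}"
      using \<open>b \<in> S\<close> \<open>T \<subseteq> S\<close> b_pos by blast
    then have "card (insert b T) \<le> card {j \<in> S. 0 < cdis f R \<sigma>0 \<sigma>1 j}"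
      by (rule card_mono[rotated]) (simp add: fin)
    with few have "card (insert b T) \<le> N" by simp
    moreover have "card (insert b T) = N + 1"
      using \<open>b \<notin> T\<close> \<open>card T = N\<close> finite_subset[OF \<open>T \<subseteq> S\<close> fin] by simp
    ultimately show False by simp
  qed
qed

lemma survivors_subset: "nsga2_survivors f N R sel \<Longrightarrow> sel \<subseteq> {..<length R}"
proof -
  have "remaining f R k \<subseteq> {..<length R}" for k
    by (induction k) auto
  then have "front f R k \<subseteq> {..<length R}" for k
    unfolding front_def nondom_def by blast
  then show "nsga2_survivors f N R sel \<Longrightarrow> sel \<subseteq> {..<length R}"
    unfolding nsga2_survivors_def by blast
qed

lemma set_next_pop:
  assumes "sel \<subseteq> {..<length R}"
  shows "set (next_pop R sel) = (!) R ` sel"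
  using assms finite_subset[OF assms] by (simp add: next_pop_def)

lemma nsga2_reachable_lengths:
  "nsga2_reachable f n N P \<Longrightarrow> \<forall>x\<in>set P. length x = n"
proof (induction rule: nsga2_reachable.induct)
  case (step P Q sel)
  have "set (next_pop (P @ Q) sel) \<subseteq> set (P @ Q)"
    using set_next_pop[OF survivors_subset[OF step.hyps(4)]] survivors_subset[OF step.hyps(4)]
    by (auto simp del: set_append)
  with step show ?case by auto
qed simp

lemma survivors_single_front:
  assumes sel: "nsga2_survivors f N R sel"
    and front: "front f R 0 = {..<length R}" and "N \<le> length R"
  obtains \<sigma>0 \<sigma>1 where "is_sorting f R 0 {..<length R} \<sigma>0" "is_sorting f R 1 {..<length R} \<sigma>1"
    "sel \<subseteq> {..<length R}" "card sel = N"
    "\<forall>a\<in>sel. \<forall>b\<in>{..<length R} - sel. cdis f R \<sigma>0 \<sigma>1 b \<le> cdis f R \<sigma>0 \<sigma>1 a"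
proof -
  have "(LEAST i. N \<le> (\<Sum>j\<le>i. card (front f R j))) = 0"
    by (rule Least_eq_0) (simp add: front \<open>N \<le> length R\<close>)
  with sel front show ?thesis
    unfolding nsga2_survivors_def by (auto intro: that)
qed

lemma oneminmax_not_sdom: "\<not> sdom (oneminmax n x) (oneminmax n y)"
  unfolding sdom_def oneminmax_def by auto

lemma front0_oneminmax: "front (oneminmax n) R 0 = {..<length R}"
  unfolding front_def nondom_def using oneminmax_not_sdom by auto

lemma obj_oneminmax_range:
  assumes "length x = n"
  shows "obj i (oneminmax n x) \<in> real ` {..n}"
proof -
  define ones where "ones = length (filter id x)"
  have "ones \<le> n"
    using assms length_filter_le unfolding ones_def by metis
  then have "obj i (oneminmax n x) = (if i = 0 then real (n - ones) else real ones)"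
    by (simp add: obj_def oneminmax_def ones_def of_nat_diff)
  moreover have "real (n - ones) \<in> real ` {..n}"
    by (rule imageI) simp
  moreover have "real ones \<in> real ` {..n}"
    using \<open>ones \<le> n\<close> by simp
  ultimately show ?thesis by simp
qed

lemma card_obj_oneminmax_le:
  assumes len: "\<forall>y\<in>set R. length y = n" and "S \<subseteq> {..<length R}"
  shows "card ((\<lambda>j. obj i (oneminmax n (R ! j))) ` S) \<le> n + 1"
proof -
  have "(\<lambda>j. obj i (oneminmax n (R ! j))) ` S \<subseteq> real ` {..n}"
  proof (rule image_subsetI)
    fix j assume "j \<in> S"
    with assms(2) have "R ! j \<in> set R" by auto
    with len show "obj i (oneminmax n (R ! j)) \<in> real ` {..n}"
      by (simp add: obj_oneminmax_range)
  qed
  then have "card ((\<lambda>j. obj i (oneminmax n (R ! j))) ` S) \<le> card (real ` {..n})"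
    by (rule card_mono[rotated]) simp
  also have "\<dots> \<le> n + 1"
    using card_image_le[of "{..n}" real] by simp
  finally show ?thesis .
qed

theorem lemma1:
  fixes n N k :: nat and P Q :: "bool list list" and x :: "bool list" and sel :: "nat set"
  assumes "n \<ge> 1"
    and "N \<ge> 4 * (n + 1)"
    and "nsga2_reachable (oneminmax n) n N P"
    and "length Q = N" and "\<forall>y\<in>set Q. length y = n"
    and "k \<le> n"
    and "x \<in> set (P @ Q)" and "oneminmax n x = (real k, real (n - k))"
    and "nsga2_survivors (oneminmax n) N (P @ Q) sel"
  shows "\<exists>y\<in>set (next_pop (P @ Q) sel). oneminmax n y = (real k, real (n - k))"
proof -
  define R where "R = P @ Q"
  have len: "\<forall>y\<in>set R. length y = n"
    using nsga2_reachable_lengths[OF assms(3)] assms(5) by (auto simp: R_def)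
  obtain \<sigma>0 \<sigma>1 where s0: "is_sorting (oneminmax n) R 0 {..<length R} \<sigma>0"
    and s1: "is_sorting (oneminmax n) R 1 {..<length R} \<sigma>1"
    and "sel \<subseteq> {..<length R}" "card sel = N"
    and cmp: "\<forall>a\<in>sel. \<forall>b\<in>{..<length R} - sel.
                cdis (oneminmax n) R \<sigma>0 \<sigma>1 b \<le> cdis (oneminmax n) R \<sigma>0 \<sigma>1 a"
    using survivors_single_front[OF assms(9)[folded R_def] front0_oneminmax] assms(4)
    by (auto simp: R_def)
  have "card {j \<in> {..<length R}. 0 < cdis (oneminmax n) R \<sigma>0 \<sigma>1 j}
          \<le> 2 * card ((\<lambda>j. obj 0 (oneminmax n (R ! j))) ` {..<length R})
            + 2 * card ((\<lambda>j. obj 1 (oneminmax n (R ! j))) ` {..<length R})"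
    by (rule card_cdis_pos_le[OF s0 s1])
  also have "\<dots> \<le> 2 * (n + 1) + 2 * (n + 1)"
    using card_obj_oneminmax_le[OF len subset_refl] by (intro add_mono mult_le_mono2)
  also have "\<dots> \<le> N"
    using assms(2) by simp
  finally have few: "card {j \<in> {..<length R}. 0 < cdis (oneminmax n) R \<sigma>0 \<sigma>1 j} \<le> N" .
  have "x \<in> set R"
    using assms(7) by (simp add: R_def)
  then obtain a where "a < length R" "R ! a = x"
    by (auto simp: in_set_conv_nth)
  then obtain b where "b \<in> sel" and "obj 0 (oneminmax n (R ! b)) = obj 0 (oneminmax n x)"
    using crowding_selection_keeps_fst_values[OF s0 s1 \<open>sel \<subseteq> _\<close> \<open>card sel = N\<close> cmp few]
    by auto
  then have "oneminmax n (R ! b) = (real k, real (n - k))"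
    using assms(6,8) by (auto simp: obj_def oneminmax_def of_nat_diff)
  moreover have "R ! b \<in> set (next_pop R sel)"
    using set_next_pop[OF \<open>sel \<subseteq> _\<close>] \<open>b \<in> sel\<close> by simp
  ultimately show ?thesis by (auto simp: R_def)
qed

end
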